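(* Let $(W,\odot,\mathbb{1})$ be a monoid and $(M,+,\mathbb{0},\otimes)$ an $\omega$-continuous (left) $W$-module. Then for every $W$-wgcl program $C$, every state $\sigma\in\Sigma$ and every weighting $f\in\mathrm{Wt}=M^\Sigma$, $$\mathrm{wp}[\![C]\!](f)(\sigma)=\sum_{\pi\in\mathrm{TPaths}(\langle C,\sigma\rangle)}\mathrm{wgt}(\pi)\otimes f(\mathrm{last}(\pi)),$$ where $\mathrm{TPaths}(\langle C,\sigma\rangle)$ is the (countable) set of terminating computation paths starting in the configuration $\langle C,\sigma\rangle$.
   Context: A (left) module over a monoid $(W,\odot,\mathbb{1})$ is a commutative monoid $(M,+,\mathbb{0})$ with an action $\otimes\colon W\times M\to M$ such that $(v\odot w)\otimes a=v\otimes(w\otimes a)$, $v\otimes(a+b)=(v\otimes a)+(v\otimes b)$, $\mathbb{1}\otimes a=a$, $v\otimes\mathbb{0}=\mathbb{0}$. The natural order is $a\preceq b$ iff $\exists c\colon a+c=b$. $M$ is $\omega$-continuous if $\preceq$ is a partial order, every increasing $\omega$-chain has a supremum, and addition (in each argument) and each map $a\mapsto w\otimes a$ preserve such suprema. A countable sum $\sum_{i}a_i$ in $M$ is the supremum of its finite partial sums. States, programs: $\Sigma$ is the set of states (maps from variables to values); expressions $E$ evaluate to $E(\sigma)$; guards $\varphi$ are predicates on states. $W$-wgcl programs: $C::= x:=E \mid C;C \mid \mathtt{if}(\varphi)\{C\}\mathtt{else}\{C\} \mid \{C\}\oplus\{C\} \mid \mathtt{weight}\ a\ (a\in W) \mid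 \mathtt{while}(\varphi)\{C\}$. Weightings $\mathrm{Wt}=M^\Sigma$ with pointwise operations and order; $([\varphi]\cdot f)(\sigma)=f(\sigma)$ if $\sigma\models\varphi$ else $\mathbb{0}$; $f[x/E](\sigma)=f(\sigma[x\mapsto E(\sigma)])$. Weakest preweighting: $\mathrm{wp}[\![x:=E]\!](f)=f[x/E]$; $\mathrm{wp}[\![C_1;C_2]\!](f)=\mathrm{wp}[\![C_1]\!](\mathrm{wp}[\![C_2]\!](f))$; $\mathrm{wp}[\![\mathtt{if}(\varphi)\{C_1\}\mathtt{else}\{C_2\}]\!](f)=[\varphi]\cdot\mathrm{wp}[\![C_1]\!](f)+[\neg\varphi]\cdot\mathrm{wp}[\![C_2]\!](f)$; $\mathrm{wp}[\![\{C_1\}\oplus\{C_2\}]\!](f)=\mathrm{wp}[\![C_1]\!](f)+\mathrm{wp}[\![C_2]\!](f)$; $\mathrm{wp}[\![\mathtt{weight}\ a]\!](f)=a\otimes f$; $\mathrm{wp}[\![\mathtt{while}(\varphi)\{C'\}]\!](f)$ is the least fixed point of $X\mapsto[\neg\varphi]\cdot f+[\varphi]\cdot\mathrm{wp}[\![C']\!](X)$. Operational semantics: configurations are $\langle C,\sigma\rangle$ for a program $C$ and $\langle\downarrow,\sigma\rangle$ (terminated). Weighted transitions $\xrightarrow{w}$ ($w\in W$): $\langle x:=E,\sigma\rangle\xrightarrow{\mathbb 1}\langle\downarrow,\sigma[x\mapsto E(\sigma)]\rangle$; $\langle\mathtt{weight}\ a,\sigma\rangle\xrightarrow{a}\langle\downarrow,\sigma\rangle$;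 $\langle\{C_1\}\oplus\{C_2\},\sigma\rangle$ has two distinct transitions (a left and a right one, counted separately even if their targets coincide) $\xrightarrow{\mathbb 1}\langle C_1,\sigma\rangle$ and $\xrightarrow{\mathbb 1}\langle C_2,\sigma\rangle$; $\langle\mathtt{if}(\varphi)\{C_1\}\mathtt{else}\{C_2\},\sigma\rangle\xrightarrow{\mathbb 1}\langle C_1,\sigma\rangle$ if $\sigma\models\varphi$ and $\xrightarrow{\mathbb 1}\langle C_2,\sigma\rangle$ otherwise; $\langle\mathtt{while}(\varphi)\{C\},\sigma\rangle\xrightarrow{\mathbb 1}\langle C;\mathtt{while}(\varphi)\{C\},\sigma\rangle$ if $\sigma\models\varphi$ and $\xrightarrow{\mathbb 1}\langle\downarrow,\sigma\rangle$ otherwise; if $\langle C_1,\sigma\rangle\xrightarrow{w}\langle C_1',\sigma'\rangle$ then $\langle C_1;C_2,\sigma\rangle\xrightarrow{w}\langle C_1';C_2,\sigma'\rangle$, and if $\langle C_1,\sigma\rangle\xrightarrow{w}\langle\downarrow,\sigma'\rangle$ then $\langle C_1;C_2,\sigma\rangle\xrightarrow{w}\langle C_2,\sigma'\rangle$. Terminated configurations have no outgoing transitions. A computation path is a finite sequence of consecutive transitions; its weight $\mathrm{wgt}(\pi)=w_1\odot w_2\odot\cdots\odot w_n$ is the product of its transition weights in order (the empty product is $\mathbb 1$). A path is terminating if it ends in a configuration $\langle\downarrow,\tau\rangle$, and then $\mathrm{last}(\pi)=\tau$. *)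

theory Defs
  imports Main
begin

definition is_module :: "('w::monoid_mult \<Rightarrow> 'm::comm_monoid_add \<Rightarrow> 'm) \<Rightarrow> bool" where
  "is_module act \<longleftrightarrow>
     (\<forall>v w a. act (v * w) a = act v (act w a)) \<and>
     (\<forall>v a b. act v (a + b) = act v a + act v b) \<and>
     (\<forall>a. act 1 a = a) \<and>
     (\<forall>v. act v 0 = 0)"

definition nle :: "'m::comm_monoid_add \<Rightarrow> 'm \<Rightarrow> bool" where
  "nle a b \<longleftrightarrow> (\<exists>c. a + c = b)"

definition is_lub :: "'m::comm_monoid_add set \<Rightarrow> 'm \<Rightarrow> bool" where
  "is_lub S s \<longleftrightarrow> (\<forall>x\<in>S. nle x s) \<and> (\<forall>u. (\<forall>x\<in>S. nle x u) \<longrightarrow> nle s u)"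

definition omega_chain :: "(nat \<Rightarrow> 'm::comm_monoid_add) \<Rightarrow> bool" where
  "omega_chain a \<longleftrightarrow> (\<forall>i. nle (a i) (a (Suc i)))"

definition omega_continuous :: "('w::monoid_mult \<Rightarrow> 'm::comm_monoid_add \<Rightarrow> 'm) \<Rightarrow> bool" where
  "omega_continuous act \<longleftrightarrow>
     (\<forall>a b::'m. nle a b \<and> nle b a \<longrightarrow> a = b) \<and>
     (\<forall>a::nat \<Rightarrow> 'm. omega_chain a \<longrightarrow> (\<exists>s. is_lub (range a) s)) \<and>
     (\<forall>(a::nat \<Rightarrow> 'm) s b. omega_chain a \<and> is_lub (range a) s \<longrightarrow>
          is_lub (range (\<lambda>i. a i + b)) (s + b) \<and>
          is_lub (range (\<lambda>i. b + a i)) (b + s)) \<and>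
     (\<forall>a s w. omega_chain a \<and> is_lub (range a) s \<longrightarrow>
          is_lub (range (\<lambda>i. act w (a i))) (act w s))"

text \<open>Countable sum: supremum (w.r.t. the natural order) of all finite partial sums.
  has_wsum g I s means the sum of g over I exists and equals s.\<close>
definition has_wsum :: "('i \<Rightarrow> 'm::comm_monoid_add) \<Rightarrow> 'i set \<Rightarrow> 'm \<Rightarrow> bool" where
  "has_wsum g I s \<longleftrightarrow> is_lub {sum g F | F. finite F \<and> F \<subseteq> I} s"

type_synonym ('v, 'val) state = "'v \<Rightarrow> 'val"

datatype ('v, 'val, 'w) prog =
    Assign 'v "('v, 'val) state \<Rightarrow> 'val"
  | Seq "('v, 'val, 'w) prog" "('v, 'val, 'w) prog"
  | If "('v, 'val) state \<Rightarrow> bool" "('v, 'val, 'w) prog" "('v, 'val, 'w) prog"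
  | Choice "('v, 'val, 'w) prog" "('v, 'val, 'w) prog"
  | Weight 'w
  | While "('v, 'val) state \<Rightarrow> bool" "('v, 'val, 'w) prog"

definition nlfp :: "(('s \<Rightarrow> 'm::comm_monoid_add) \<Rightarrow> ('s \<Rightarrow> 'm)) \<Rightarrow> ('s \<Rightarrow> 'm)" where
  "nlfp \<Phi> = (THE X. \<Phi> X = X \<and> (\<forall>Y. \<Phi> Y = Y \<longrightarrow> (\<forall>s. nle (X s) (Y s))))"

definition guard :: "('s \<Rightarrow> bool) \<Rightarrow> ('s \<Rightarrow> 'm::comm_monoid_add) \<Rightarrow> ('s \<Rightarrow> 'm)" where
  "guard \<phi> f = (\<lambda>s. if \<phi> s then f s else 0)"

primrec wp :: "('w::monoid_mult \<Rightarrow> 'm::comm_monoid_add \<Rightarrow> 'm) \<Rightarrow> ('v, 'val, 'w) prog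
      \<Rightarrow> (('v, 'val) state \<Rightarrow> 'm) \<Rightarrow> (('v, 'val) state \<Rightarrow> 'm)" where
  "wp act (Assign x E) f = (\<lambda>\<sigma>. f (\<sigma>(x := E \<sigma>)))"
| "wp act (Seq C1 C2) f = wp act C1 (wp act C2 f)"
| "wp act (If \<phi> C1 C2) f =
     (\<lambda>\<sigma>. guard \<phi> (wp act C1 f) \<sigma> + guard (\<lambda>s. \<not> \<phi> s) (wp act C2 f) \<sigma>)"
| "wp act (Choice C1 C2) f = (\<lambda>\<sigma>. wp act C1 f \<sigma> + wp act C2 f \<sigma>)"
| "wp act (Weight a) f = (\<lambda>\<sigma>. act a (f \<sigma>))"
| "wp act (While \<phi> C) f =
     nlfp (\<lambda>X \<sigma>. guard (\<lambda>s. \<not> \<phi> s) f \<sigma> + guard \<phi> (wp act C X) \<sigma>)"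

datatype ('v, 'val, 'w) conf =
    Conf "('v, 'val, 'w) prog" "('v, 'val) state"
  | Term "('v, 'val) state"

text \<open>Transition tags: the left and right transitions of a choice are tagged L and R
  so that they are counted separately even if their targets coincide; all other
  transitions are tagged N (inherited through sequential composition).\<close>
datatype tag = L | R | N

inductive step :: "('v, 'val, 'w::monoid_mult) conf \<Rightarrow> tag \<Rightarrow> 'w \<Rightarrow> ('v, 'val, 'w) conf \<Rightarrow> bool" where
  step_assign: "step (Conf (Assign x E) \<sigma>) N 1 (Term (\<sigma>(x := E \<sigma>)))"
| step_weight: "step (Conf (Weight a) \<sigma>) N a (Term \<sigma>)"
| step_choiceL: "step (Conf (Choice C1 C2) \<sigma>) L 1 (Conf C1 \<sigma>)"
| step_choiceR: "step (Conf (Choice C1 C2) \<sigma>) R 1 (Conf C2 \<sigma>)"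
| step_ifT: "\<phi> \<sigma> \<Longrightarrow> step (Conf (If \<phi> C1 C2) \<sigma>) N 1 (Conf C1 \<sigma>)"
| step_ifF: "\<not> \<phi> \<sigma> \<Longrightarrow> step (Conf (If \<phi> C1 C2) \<sigma>) N 1 (Conf C2 \<sigma>)"
| step_whileT: "\<phi> \<sigma> \<Longrightarrow> step (Conf (While \<phi> C) \<sigma>) N 1 (Conf (Seq C (While \<phi> C)) \<sigma>)"
| step_whileF: "\<not> \<phi> \<sigma> \<Longrightarrow> step (Conf (While \<phi> C) \<sigma>) N 1 (Term \<sigma>)"
| step_seq1: "step (Conf C1 \<sigma>) d w (Conf C1' \<sigma>') \<Longrightarrow>
     step (Conf (Seq C1 C2) \<sigma>) d w (Conf (Seq C1' C2) \<sigma>')"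
| step_seq2: "step (Conf C1 \<sigma>) d w (Term \<sigma>') \<Longrightarrow>
     step (Conf (Seq C1 C2) \<sigma>) d w (Conf C2 \<sigma>')"

text \<open>A computation path from a start configuration c is the list of its transitions,
  each given by (tag, weight, target configuration).\<close>
type_synonym ('v, 'val, 'w) path = "(tag \<times> 'w \<times> ('v, 'val, 'w) conf) list"

fun is_path :: "('v, 'val, 'w::monoid_mult) conf \<Rightarrow> ('v, 'val, 'w) path \<Rightarrow> bool" where
  "is_path c [] = True"
| "is_path c ((d, w, c') # ts) = (step c d w c' \<and> is_path c' ts)"

fun end_conf :: "('v, 'val, 'w) conf \<Rightarrow> ('v, 'val, 'w) path \<Rightarrow> ('v, 'val, 'w) conf" where
  "end_conf c [] = c"
| "end_conf c ((d, w, c') # ts) = end_conf c' ts"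

definition wgt :: "('v, 'val, 'w::monoid_mult) path \<Rightarrow> 'w" where
  "wgt ts = prod_list (map (\<lambda>(d, w, c'). w) ts)"

definition tpaths :: "('v, 'val, 'w::monoid_mult) conf \<Rightarrow> ('v, 'val, 'w) path set" where
  "tpaths c = {ts. is_path c ts \<and> (\<exists>\<tau>. end_conf c ts = Term \<tau>)}"

fun conf_state :: "('v, 'val, 'w) conf \<Rightarrow> ('v, 'val) state" where
  "conf_state (Conf C \<sigma>) = \<sigma>"
| "conf_state (Term \<tau>) = \<tau>"

definition last_state :: "('v, 'val, 'w) conf \<Rightarrow> ('v, 'val, 'w) path \<Rightarrow> ('v, 'val) state" where
  "last_state c ts = conf_state (end_conf c ts)"

end

theory Submission
  imports Defs "HOL-Library.Countable_Set"
begin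

text \<open>
  Terminating paths split at their first transition, and the terminating paths
  of C1; C2 correspond bijectively to pairs of a terminating path of C1 and one of C2 from the
  state where the first ends. All path sets are countable because the transition system is
  finitely branching, and in an omega-continuous module countable sums may be regrouped along
  such decompositions and commute with the action; so the path sum obeys the defining
  equations of wp for every construct except loops. For a loop the path sum is a fixed point
  of the characteristic function, and it is the least one: by induction on a bound for the
  path lengths, every finite partial sum lies below any other fixed point.
\<close>

section \<open>Countable sums in omega-continuous modules\<close>

lemma nle_refl: "nle a a"
  unfolding nle_def by (rule exI[of _ 0]) simp

lemma nle_trans [trans]: "nle a b \<Longrightarrow> nle b c \<Longrightarrow> nle a c"
  unfolding nle_def by (metis add.assoc)

lemma nle_zero: "nle 0 a"
  unfolding nle_def by simp

lemma nle_add_mono: "nle a b \<Longrightarrow> nle c d \<Longrightarrow> nle (a + c) (b + d)"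
  unfolding nle_def by (metis add.assoc add.commute)

lemma sum_nle_mono: "(\<And>i. i \<in> K \<Longrightarrow> nle (f i) (g i)) \<Longrightarrow> nle (sum f K) (sum g K)"
  by (induction K rule: infinite_finite_induct) (simp_all add: nle_refl nle_add_mono)

lemma sum_nle_subset: "finite G \<Longrightarrow> F \<subseteq> G \<Longrightarrow> nle (sum g F) (sum g G)"
  unfolding nle_def by (metis sum.subset_diff add.commute)

lemma is_lub_upper: "is_lub S s \<Longrightarrow> x \<in> S \<Longrightarrow> nle x s"
  unfolding is_lub_def by blast

lemma is_lub_least: "is_lub S s \<Longrightarrow> (\<And>x. x \<in> S \<Longrightarrow> nle x u) \<Longrightarrow> nle s u"
  unfolding is_lub_def by blast

lemma is_lub_cofinal:
  assumes "\<And>x. x \<in> S \<Longrightarrow> \<exists>y\<in>T. nle x y" and "\<And>y. y \<in> T \<Longrightarrow> \<exists>x\<in>S. nle y x"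
  shows "is_lub S s \<longleftrightarrow> is_lub T s"
  using assms unfolding is_lub_def by (meson nle_trans)

lemma omega_chain_nle:
  assumes "omega_chain a" and "m \<le> n"
  shows "nle (a m) (a n)"
  using assms(2)
proof (induction n rule: dec_induct)
  case base
  show ?case by (rule nle_refl)
next
  case (step n)
  with assms(1) show ?case unfolding omega_chain_def by (meson nle_trans)
qed

lemma omega_chain_sum:
  "(\<And>i. i \<in> K \<Longrightarrow> omega_chain (a i)) \<Longrightarrow> omega_chain (\<lambda>n. \<Sum>i\<in>K. a i n)"
  unfolding omega_chain_def by (simp add: sum_nle_mono)

lemma has_wsum_upper: "has_wsum g I s \<Longrightarrow> finite F \<Longrightarrow> F \<subseteq> I \<Longrightarrow> nle (sum g F) s"
  unfolding has_wsum_def by (erule is_lub_upper) blast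

lemma has_wsum_least:
  "has_wsum g I s \<Longrightarrow> (\<And>F. finite F \<Longrightarrow> F \<subseteq> I \<Longrightarrow> nle (sum g F) u) \<Longrightarrow> nle s u"
  unfolding has_wsum_def by (erule is_lub_least) blast

lemma has_wsumI:
  assumes "\<And>F. finite F \<Longrightarrow> F \<subseteq> I \<Longrightarrow> nle (sum g F) s"
    and "\<And>u. (\<And>F. finite F \<Longrightarrow> F \<subseteq> I \<Longrightarrow> nle (sum g F) u) \<Longrightarrow> nle s u"
  shows "has_wsum g I s"
  using assms unfolding has_wsum_def is_lub_def by blast

lemma has_wsum_finite: "finite I \<Longrightarrow> has_wsum g I (sum g I)"
  by (rule has_wsumI) (auto intro: sum_nle_subset)

lemma has_wsum_cong: "(\<And>i. i \<in> I \<Longrightarrow> g i = h i) \<Longrightarrow> has_wsum g I s \<longleftrightarrow> has_wsum h I s"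
proof -
  assume "\<And>i. i \<in> I \<Longrightarrow> g i = h i"
  then have "sum g ` {F. finite F \<and> F \<subseteq> I} = sum h ` {F. finite F \<and> F \<subseteq> I}"
    by (intro image_cong sum.cong) auto
  then show ?thesis
    unfolding has_wsum_def setcompr_eq_image by simp
qed

lemma has_wsum_reindex: "inj_on h A \<Longrightarrow> has_wsum g (h ` A) s \<longleftrightarrow> has_wsum (g \<circ> h) A s"
proof -
  assume inj: "inj_on h A"
  have "{sum g F | F. finite F \<and> F \<subseteq> h ` A} = {sum (g \<circ> h) G | G. finite G \<and> G \<subseteq> A}"
  proof safe
    fix F assume "finite F" "F \<subseteq> h ` A"
    then obtain G where "G \<subseteq> A" "finite G" "F = h ` G"
      by (meson finite_subset_image)
    with inj show "\<exists>G. sum g F = sum (g \<circ> h) G \<and> finite G \<and> G \<subseteq> A"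
      by (metis inj_on_subset sum.reindex)
  next
    fix G assume "finite G" "G \<subseteq> A"
    with inj show "\<exists>F. sum (g \<circ> h) G = sum g F \<and> finite F \<and> F \<subseteq> h ` A"
      by (metis finite_imageI image_mono inj_on_subset sum.reindex)
  qed
  then show ?thesis
    unfolding has_wsum_def by simp
qed

lemma sum_Sigma_nle_has_wsum:
  assumes "finite F" and "has_wsum s I t" and "fst ` F \<subseteq> I"
    and "\<And>i. i \<in> fst ` F \<Longrightarrow> nle (sum (g i) (F `` {i})) (s i)"
  shows "nle (\<Sum>(i, j)\<in>F. g i j) t"
proof -
  have F: "F = Sigma (fst ` F) (\<lambda>i. F `` {i})"
    by force
  have "finite (F `` {i})" for i
    using \<open>finite F\<close> by (simp add: finite_Image)
  then have "(\<Sum>(i, j)\<in>F. g i j) = (\<Sum>i\<in>fst ` F. sum (g i) (F `` {i}))"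
    using \<open>finite F\<close> by (subst F) (simp add: sum.Sigma)
  also have "nle \<dots> (sum s (fst ` F))"
    by (rule sum_nle_mono) (rule assms(4))
  also have "nle \<dots> t"
    using assms by (intro has_wsum_upper) auto
  finally show ?thesis .
qed

text \<open>Exhausting a countable index set by these finite sets turns a countable sum into the
  supremum of an omega-chain, which is what omega-continuity speaks about.\<close>

definition enum_prefix :: "'a set \<Rightarrow> nat \<Rightarrow> 'a set" where
  "enum_prefix I n = {x \<in> I. to_nat_on I x < n}"

lemma enum_prefix_subset: "enum_prefix I n \<subseteq> I"
  unfolding enum_prefix_def by blast

lemma finite_enum_prefix: "countable I \<Longrightarrow> finite (enum_prefix I n)"
proof -
  assume "countable I"
  then have "finite (to_nat_on I -` {..<n} \<inter> I)"
    by (intro finite_vimage_IntI) auto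
  then show ?thesis
    unfolding enum_prefix_def by (simp add: Int_def conj_commute)
qed

lemma enum_prefix_cover:
  assumes "finite F" and "F \<subseteq> I"
  obtains n where "F \<subseteq> enum_prefix I n"
proof -
  obtain n where "to_nat_on I ` F \<subseteq> {..<n}"
    using finite_nat_bounded \<open>finite F\<close> by blast
  with \<open>F \<subseteq> I\<close> have "F \<subseteq> enum_prefix I n"
    unfolding enum_prefix_def by auto
  then show thesis ..
qed

lemma enum_prefix_mono: "m \<le> n \<Longrightarrow> enum_prefix I m \<subseteq> enum_prefix I n"
  unfolding enum_prefix_def by auto

lemma omega_chain_sum_enum_prefix:
  "countable I \<Longrightarrow> omega_chain (\<lambda>n. sum g (enum_prefix I n))"
  unfolding omega_chain_def by (simp add: sum_nle_subset finite_enum_prefix enum_prefix_mono)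

lemma has_wsum_iff_enum_prefix:
  assumes "countable I"
  shows "has_wsum g I s \<longleftrightarrow> is_lub (range (\<lambda>n. sum g (enum_prefix I n))) s"
  unfolding has_wsum_def
proof (rule is_lub_cofinal)
  fix x assume "x \<in> {sum g F | F. finite F \<and> F \<subseteq> I}"
  then obtain F where F: "x = sum g F" "finite F" "F \<subseteq> I"
    by blast
  obtain n where "F \<subseteq> enum_prefix I n"
    using F(2,3) by (rule enum_prefix_cover)
  with F assms have "nle x (sum g (enum_prefix I n))"
    by (simp add: finite_enum_prefix sum_nle_subset)
  then show "\<exists>y \<in> range (\<lambda>n. sum g (enum_prefix I n)). nle x y"
    by blast
next
  fix y assume "y \<in> range (\<lambda>n. sum g (enum_prefix I n))"
  then obtain n where "y = sum g (enum_prefix I n)"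
    by blast
  moreover have "finite (enum_prefix I n)" "enum_prefix I n \<subseteq> I"
    using assms by (simp_all add: finite_enum_prefix enum_prefix_subset)
  ultimately show "\<exists>x \<in> {sum g F | F. finite F \<and> F \<subseteq> I}. nle y x"
    using nle_refl by blast
qed

locale omega_module =
  fixes act :: "'w::monoid_mult \<Rightarrow> 'm::comm_monoid_add \<Rightarrow> 'm"
  assumes module: "is_module act"
    and continuous: "omega_continuous act"
begin

lemma act_mult: "act (v * w) a = act v (act w a)"
  and act_add: "act v (a + b) = act v a + act v b"
  and act_one: "act 1 a = a"
  and act_zero: "act v 0 = 0"
  using module unfolding is_module_def by blast+

lemma nle_antisym: "nle a b \<Longrightarrow> nle b a \<Longrightarrow> a = (b::'m)"
  and omega_chain_has_lub: "omega_chain (c :: nat \<Rightarrow> 'm) \<Longrightarrow> \<exists>s. is_lub (range c) s"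
  and is_lub_add_right: "omega_chain c \<Longrightarrow> is_lub (range c) s \<Longrightarrow>
    is_lub (range (\<lambda>i. c i + b)) (s + b)"
  and is_lub_add_left: "omega_chain c \<Longrightarrow> is_lub (range c) s \<Longrightarrow>
    is_lub (range (\<lambda>i. b + c i)) (b + s)"
  and is_lub_act: "omega_chain c \<Longrightarrow> is_lub (range c) s \<Longrightarrow>
    is_lub (range (\<lambda>i. act w (c i))) (act w s)"
  using continuous unfolding omega_continuous_def by blast+

lemma act_nle_mono: "nle a b \<Longrightarrow> nle (act w a) (act w b)"
  unfolding nle_def by (metis act_add)

lemma act_sum: "act w (sum g K) = (\<Sum>i\<in>K. act w (g i))"
  by (induction K rule: infinite_finite_induct) (simp_all add: act_zero act_add)

lemma is_lub_unique: "is_lub S s \<Longrightarrow> is_lub S t \<Longrightarrow> s = (t::'m)"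
  unfolding is_lub_def by (meson nle_antisym)

lemma is_lub_add:
  fixes a b :: "nat \<Rightarrow> 'm"
  assumes "omega_chain a" "omega_chain b" "is_lub (range a) sa" "is_lub (range b) sb"
  shows "is_lub (range (\<lambda>n. a n + b n)) (sa + sb)"
  unfolding is_lub_def
proof safe
  fix n
  show "nle (a n + b n) (sa + sb)"
    using assms(3,4) by (intro nle_add_mono) (auto intro: is_lub_upper)
next
  fix u assume u: "\<forall>x \<in> range (\<lambda>n. a n + b n). nle x u"
  have partial: "nle (a m + sb) u" for m
  proof (rule is_lub_least[OF is_lub_add_left[OF assms(2,4)]])
    fix x assume "x \<in> range (\<lambda>n. a m + b n)"
    then obtain n where "x = a m + b n"
      by blast
    also have "nle \<dots> (a (max m n) + b (max m n))"
      by (intro nle_add_mono omega_chain_nle[OF assms(1)] omega_chain_nle[OF assms(2)]) auto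
    also have "nle \<dots> u"
      using u by blast
    finally show "nle x u" .
  qed
  show "nle (sa + sb) u"
    by (rule is_lub_least[OF is_lub_add_right[OF assms(1,3)]]) (auto simp: partial)
qed

lemma is_lub_sum:
  fixes a :: "'i \<Rightarrow> nat \<Rightarrow> 'm"
  assumes "finite K"
    and "\<And>i. i \<in> K \<Longrightarrow> omega_chain (a i)"
    and "\<And>i. i \<in> K \<Longrightarrow> is_lub (range (a i)) (s i)"
  shows "is_lub (range (\<lambda>n. \<Sum>i\<in>K. a i n)) (\<Sum>i\<in>K. s i)"
  using assms
proof (induction K rule: finite_induct)
  case empty
  show ?case
    unfolding is_lub_def by (simp add: nle_refl)
next
  case (insert k K)
  then show ?case
    by (simp add: is_lub_add omega_chain_sum)
qed

lemma has_wsum_exists: "countable I \<Longrightarrow> \<exists>s::'m. has_wsum g I s"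
  by (simp add: has_wsum_iff_enum_prefix omega_chain_has_lub omega_chain_sum_enum_prefix)

lemma has_wsum_unique: "has_wsum g I (s::'m) \<Longrightarrow> has_wsum g I t \<Longrightarrow> s = t"
  unfolding has_wsum_def by (rule is_lub_unique)

lemma has_wsum_act:
  fixes g :: "'i \<Rightarrow> 'm"
  assumes "countable I" and "has_wsum g I s"
  shows "has_wsum (\<lambda>i. act w (g i)) I (act w s)"
  using is_lub_act[OF omega_chain_sum_enum_prefix] assms
  by (simp add: has_wsum_iff_enum_prefix act_sum)

lemma has_wsum_Sigma:
  fixes g :: "'i \<Rightarrow> 'j \<Rightarrow> 'm"
  assumes countable: "\<And>i. i \<in> I \<Longrightarrow> countable (J i)"
    and inner: "\<And>i. i \<in> I \<Longrightarrow> has_wsum (g i) (J i) (s i)"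
    and outer: "has_wsum s I t"
  shows "has_wsum (\<lambda>(i, j). g i j) (Sigma I J) t"
proof (rule has_wsumI)
  fix F assume F: "finite F" "F \<subseteq> Sigma I J"
  show "nle (sum (\<lambda>(i, j). g i j) F) t"
  proof (rule sum_Sigma_nle_has_wsum[OF F(1) outer])
    show "fst ` F \<subseteq> I"
      using F(2) by auto
    fix i assume "i \<in> fst ` F"
    with F show "nle (sum (g i) (F `` {i})) (s i)"
      by (intro has_wsum_upper[OF inner]) auto
  qed
next
  fix u assume u: "\<And>F. finite F \<Longrightarrow> F \<subseteq> Sigma I J \<Longrightarrow> nle (sum (\<lambda>(i, j). g i j) F) u"
  show "nle t u"
  proof (rule has_wsum_least[OF outer])
    fix K assume K: "finite K" "K \<subseteq> I"
    let ?E = "\<lambda>i. enum_prefix (J i)"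
    have lub: "is_lub (range (\<lambda>n. \<Sum>i\<in>K. sum (g i) (?E i n))) (sum s K)"
    proof (rule is_lub_sum[OF K(1)])
      fix i assume "i \<in> K"
      with K countable inner show "omega_chain (\<lambda>n. sum (g i) (?E i n))"
        and "is_lub (range (\<lambda>n. sum (g i) (?E i n))) (s i)"
        by (auto simp: omega_chain_sum_enum_prefix has_wsum_iff_enum_prefix)
    qed
    have bound: "nle (\<Sum>i\<in>K. sum (g i) (?E i n)) u" for n
    proof -
      have E: "finite (?E i n)" "?E i n \<subseteq> J i" if "i \<in> K" for i
        using that K countable
        by (auto simp: finite_enum_prefix intro: enum_prefix_subset[THEN subsetD])
      have "(\<Sum>i\<in>K. sum (g i) (?E i n)) = sum (\<lambda>(i, j). g i j) (Sigma K (\<lambda>i. ?E i n))"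
        using K E by (subst sum.Sigma) auto
      also have "nle \<dots> u"
        using K E by (intro u finite_SigmaI) auto
      finally show ?thesis .
    qed
    show "nle (sum s K) u"
      by (rule is_lub_least[OF lub]) (auto simp: bound)
  qed
qed

end

section \<open>Terminating paths\<close>

definition succs :: "('v, 'val, 'w::monoid_mult) conf \<Rightarrow> (tag \<times> 'w \<times> ('v, 'val, 'w) conf) set" where
  "succs c = {(d, w, c'). step c d w c'}"

lemma succs_Term: "succs (Term \<tau>) = {}"
  unfolding succs_def by (auto elim: step.cases)

lemma succs_Assign: "succs (Conf (Assign x E) \<sigma>) = {(N, 1, Term (\<sigma>(x := E \<sigma>)))}"
  and succs_Weight: "succs (Conf (Weight a) \<sigma>) = {(N, a, Term \<sigma>)}"
  and succs_Choice: "succs (Conf (Choice C1 C2) \<sigma>) = {(L, 1, Conf C1 \<sigma>), (R, 1, Conf C2 \<sigma>)}"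
  and succs_If: "succs (Conf (If \<phi> C1 C2) \<sigma>) =
    (if \<phi> \<sigma> then {(N, 1, Conf C1 \<sigma>)} else {(N, 1, Conf C2 \<sigma>)})"
  and succs_While: "succs (Conf (While \<phi> C) \<sigma>) =
    (if \<phi> \<sigma> then {(N, 1, Conf (Seq C (While \<phi> C)) \<sigma>)} else {(N, 1, Term \<sigma>)})"
  unfolding succs_def by (auto elim: step.cases intro: step.intros)

fun seq_conf :: "('v, 'val, 'w) prog \<Rightarrow> ('v, 'val, 'w) conf \<Rightarrow> ('v, 'val, 'w) conf" where
  "seq_conf C2 (Conf C \<sigma>) = Conf (Seq C C2) \<sigma>"
| "seq_conf C2 (Term \<tau>) = Conf C2 \<tau>"

lemma Seq_neq_right: "Seq C1 C2 \<noteq> C2"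
proof
  assume "Seq C1 C2 = C2"
  then have "size (Seq C1 C2) = size C2"
    by simp
  then show False
    by simp
qed

lemma inj_seq_conf: "inj (seq_conf C2)"
proof (rule injI)
  fix a b
  show "seq_conf C2 a = seq_conf C2 b \<Longrightarrow> a = b"
    by (cases a; cases b) (auto simp: Seq_neq_right Seq_neq_right[symmetric])
qed

lemma step_Seq_iff:
  "step (Conf (Seq C1 C2) \<sigma>) d w c \<longleftrightarrow> (\<exists>c1. step (Conf C1 \<sigma>) d w c1 \<and> c = seq_conf C2 c1)"
proof
  assume "step (Conf (Seq C1 C2) \<sigma>) d w c"
  then show "\<exists>c1. step (Conf C1 \<sigma>) d w c1 \<and> c = seq_conf C2 c1"
    by (cases rule: step.cases) (auto intro: exI[of _ "Conf _ _"] exI[of _ "Term _"])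
next
  assume "\<exists>c1. step (Conf C1 \<sigma>) d w c1 \<and> c = seq_conf C2 c1"
  then obtain c1 where "step (Conf C1 \<sigma>) d w c1" "c = seq_conf C2 c1"
    by blast
  then show "step (Conf (Seq C1 C2) \<sigma>) d w c"
    by (cases c1) (auto intro: step.intros)
qed

lemma succs_Seq:
  "succs (Conf (Seq C1 C2) \<sigma>) = (\<lambda>(d, w, c). (d, w, seq_conf C2 c)) ` succs (Conf C1 \<sigma>)"
  unfolding succs_def step_Seq_iff by (auto intro: rev_image_eqI[of "(_, _, _)"])

lemma finite_succs: "finite (succs c)"
proof (cases c)
  case (Conf C \<sigma>)
  then show ?thesis
    by (induction C arbitrary: \<sigma> c)
       (simp_all add: succs_Assign succs_Weight succs_Choice succs_If succs_While succs_Seq)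
next
  case (Term \<tau>)
  then show ?thesis
    by (simp add: succs_Term)
qed

lemma wgt_Cons: "wgt ((d, w, c) # p) = w * wgt p"
  by (simp add: wgt_def)

lemma wgt_append: "wgt (p @ q) = wgt p * wgt q"
  by (simp add: wgt_def)

lemma is_path_Term: "is_path (Term \<tau>) p \<longleftrightarrow> p = []"
  by (cases p) (auto elim: step.cases)

lemma is_path_append: "is_path c (p @ q) \<longleftrightarrow> is_path c p \<and> is_path (end_conf c p) q"
  by (induction c p rule: is_path.induct) auto

lemma end_conf_append: "end_conf c (p @ q) = end_conf (end_conf c p) q"
  by (induction c p rule: end_conf.induct) auto

lemma tpaths_Term: "tpaths (Term \<tau>) = {[]}"
  by (auto simp: tpaths_def is_path_Term)

lemma end_conf_tpaths: "p \<in> tpaths c \<Longrightarrow> end_conf c p = Term (last_state c p)"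
  by (auto simp: tpaths_def last_state_def)

lemma tpaths_Conf:
  "tpaths (Conf C \<sigma>) = (\<lambda>(x, p). x # p) ` Sigma (succs (Conf C \<sigma>)) (\<lambda>(d, w, c). tpaths c)"
proof safe
  fix p assume "p \<in> tpaths (Conf C \<sigma>)"
  then obtain d w c q where "p = (d, w, c) # q" "(d, w, c) \<in> succs (Conf C \<sigma>)" "q \<in> tpaths c"
    by (cases p) (auto simp: tpaths_def succs_def)
  then show "p \<in> (\<lambda>(x, p). x # p) ` Sigma (succs (Conf C \<sigma>)) (\<lambda>(d, w, c). tpaths c)"
    by (auto intro!: image_eqI[of _ _ "((d, w, c), q)"])
next
  fix d w c q
  assume "(d, w, c) \<in> succs (Conf C \<sigma>)" "q \<in> tpaths c"
  then show "(d, w, c) # q \<in> tpaths (Conf C \<sigma>)"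
    by (simp add: tpaths_def succs_def)
qed

lemma tpaths_Conf_single:
  "succs (Conf C \<sigma>) = {(d, w, c)} \<Longrightarrow> tpaths (Conf C \<sigma>) = Cons (d, w, c) ` tpaths c"
  by (auto simp: tpaths_Conf)

lemma finite_paths_length: "finite {p. is_path c p \<and> length p = n}"
proof (induction n arbitrary: c)
  case 0
  show ?case
    by simp
next
  case (Suc n)
  have "{p. is_path c p \<and> length p = Suc n} \<subseteq>
      (\<lambda>(x, p). x # p) ` Sigma (succs c) (\<lambda>(d, w, c'). {p. is_path c' p \<and> length p = n})"
  proof
    fix p assume "p \<in> {p. is_path c p \<and> length p = Suc n}"
    then obtain d w c' q where "p = (d, w, c') # q" "step c d w c'" "is_path c' q" "length q = n"
      by (auto simp: length_Suc_conv)
    then show "p \<in> (\<lambda>(x, p). x # p) `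
        Sigma (succs c) (\<lambda>(d, w, c'). {p. is_path c' p \<and> length p = n})"
      by (auto simp: succs_def intro!: image_eqI[of _ _ "((d, w, c'), q)"])
  qed
  moreover have "finite (Sigma (succs c) (\<lambda>(d, w, c'). {p. is_path c' p \<and> length p = n}))"
    using finite_succs Suc.IH by (intro finite_SigmaI) auto
  ultimately show ?case
    by (meson finite_imageI finite_subset)
qed

lemma countable_tpaths: "countable (tpaths c)"
proof (rule countable_subset)
  show "tpaths c \<subseteq> (\<Union>n. {p. is_path c p \<and> length p = n})"
    by (auto simp: tpaths_def)
  show "countable (\<Union>n. {p. is_path c p \<and> length p = n})"
    by (rule countable_UN) (simp_all add: countable_finite finite_paths_length)
qed

definition seq_path :: "('v, 'val, 'w) prog \<Rightarrow> ('v, 'val, 'w) path \<Rightarrow> ('v, 'val, 'w) path" where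
  "seq_path C2 = map (\<lambda>(d, w, c). (d, w, seq_conf C2 c))"

lemma seq_path_simps [simp]:
  "seq_path C2 [] = []"
  "seq_path C2 ((d, w, c) # p) = (d, w, seq_conf C2 c) # seq_path C2 p"
  by (simp_all add: seq_path_def)

lemma wgt_seq_path: "wgt (seq_path C2 p) = wgt p"
  by (induction p) (auto simp: wgt_Cons)

lemma is_path_seq_path: "is_path c p \<Longrightarrow> is_path (seq_conf C2 c) (seq_path C2 p)"
proof (induction c p rule: is_path.induct)
  case (1 c)
  show ?case
    by simp
next
  case (2 c d w c' p)
  then obtain C \<sigma> where "c = Conf C \<sigma>"
    by (cases c) (auto elim: step.cases)
  with 2 show ?case
    by (auto simp: step_Seq_iff)
qed

lemma end_conf_seq_path: "end_conf (seq_conf C2 c) (seq_path C2 p) = seq_conf C2 (end_conf c p)"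
  by (induction c p rule: end_conf.induct) simp_all

definition seq_pairs :: "('v, 'val, 'w::monoid_mult) prog \<Rightarrow> ('v, 'val) state \<Rightarrow> ('v, 'val, 'w) prog
    \<Rightarrow> (('v, 'val, 'w) path \<times> ('v, 'val, 'w) path) set" where
  "seq_pairs C1 \<sigma> C2 =
    (SIGMA p1:tpaths (Conf C1 \<sigma>). tpaths (Conf C2 (last_state (Conf C1 \<sigma>) p1)))"

definition seq_join :: "('v, 'val, 'w) prog
    \<Rightarrow> ('v, 'val, 'w) path \<times> ('v, 'val, 'w) path \<Rightarrow> ('v, 'val, 'w) path" where
  "seq_join C2 = (\<lambda>(p1, p2). seq_path C2 p1 @ p2)"

lemma end_conf_seq_path_tpaths:
  "p1 \<in> tpaths (Conf C1 \<sigma>) \<Longrightarrow>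
    end_conf (Conf (Seq C1 C2) \<sigma>) (seq_path C2 p1) = Conf C2 (last_state (Conf C1 \<sigma>) p1)"
  using end_conf_seq_path[of C2 "Conf C1 \<sigma>" p1] by (simp add: end_conf_tpaths)

lemma last_state_seq_join:
  "p1 \<in> tpaths (Conf C1 \<sigma>) \<Longrightarrow> last_state (Conf (Seq C1 C2) \<sigma>) (seq_join C2 (p1, p2)) =
    last_state (Conf C2 (last_state (Conf C1 \<sigma>) p1)) p2"
  by (simp add: seq_join_def last_state_def end_conf_append end_conf_seq_path_tpaths)

lemma wgt_seq_join: "wgt (seq_join C2 (p1, p2)) = wgt p1 * wgt p2"
  by (simp add: seq_join_def wgt_append wgt_seq_path)

lemma tpaths_Seq_decompose:
  "p \<in> tpaths (Conf (Seq C1 C2) \<sigma>) \<Longrightarrow> \<exists>q \<in> seq_pairs C1 \<sigma> C2. p = seq_join C2 q"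
proof (induction p arbitrary: C1 \<sigma>)
  case Nil
  then show ?case
    by (simp add: tpaths_def)
next
  case (Cons x p)
  then obtain d w c1 where x: "x = (d, w, seq_conf C2 c1)" and step: "step (Conf C1 \<sigma>) d w c1"
    and p: "p \<in> tpaths (seq_conf C2 c1)"
    by (cases x) (auto simp: tpaths_def step_Seq_iff)
  show ?case
  proof (cases c1)
    case (Conf C1' \<sigma>')
    obtain q where "q \<in> seq_pairs C1' \<sigma>' C2" "p = seq_join C2 q"
      using Cons.IH[of C1' \<sigma>'] p Conf by auto
    then obtain p1 p2 where "(p1, p2) \<in> seq_pairs C1' \<sigma>' C2" "p = seq_join C2 (p1, p2)"
      by (metis prod.collapse)
    with step Conf have "((d, w, c1) # p1, p2) \<in> seq_pairs C1 \<sigma> C2"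
      by (auto simp: seq_pairs_def tpaths_def last_state_def)
    moreover have "x # p = seq_join C2 ((d, w, c1) # p1, p2)"
      using x \<open>p = seq_join C2 (p1, p2)\<close> by (simp add: seq_join_def)
    ultimately show ?thesis
      by blast
  next
    case (Term \<sigma>')
    with step p have "([(d, w, c1)], p) \<in> seq_pairs C1 \<sigma> C2"
      by (auto simp: seq_pairs_def tpaths_def last_state_def)
    moreover have "x # p = seq_join C2 ([(d, w, c1)], p)"
      using x Term by (simp add: seq_join_def)
    ultimately show ?thesis
      by blast
  qed
qed

lemma tpaths_Seq: "tpaths (Conf (Seq C1 C2) \<sigma>) = seq_join C2 ` seq_pairs C1 \<sigma> C2"
proof safe
  fix p assume "p \<in> tpaths (Conf (Seq C1 C2) \<sigma>)"
  then show "p \<in> seq_join C2 ` seq_pairs C1 \<sigma> C2"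
    using tpaths_Seq_decompose by blast
next
  fix p1 p2 assume "(p1, p2) \<in> seq_pairs C1 \<sigma> C2"
  then have p1: "p1 \<in> tpaths (Conf C1 \<sigma>)"
    and p2: "p2 \<in> tpaths (Conf C2 (last_state (Conf C1 \<sigma>) p1))"
    by (auto simp: seq_pairs_def)
  have "is_path (Conf (Seq C1 C2) \<sigma>) (seq_path C2 p1)"
    using p1 is_path_seq_path[of "Conf C1 \<sigma>" p1 C2] by (simp add: tpaths_def)
  with p2 show "seq_join C2 (p1, p2) \<in> tpaths (Conf (Seq C1 C2) \<sigma>)"
    using end_conf_seq_path_tpaths[OF p1]
    by (auto simp: seq_join_def tpaths_def is_path_append end_conf_append)
qed

lemma seq_path_append_cancel:
  assumes "p1 \<in> tpaths c" and "q1 \<in> tpaths c"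
    and "seq_path C2 p1 @ p2 = seq_path C2 q1 @ q2"
  shows "p1 = q1"
  using assms
proof (induction p1 arbitrary: c q1)
  \<comment> \<open>Neither of two terminating paths from the same configuration properly extends the
    other, as terminated configurations have no successors.\<close>
  case Nil
  then obtain \<tau> where "c = Term \<tau>"
    by (auto simp: tpaths_def)
  with Nil.prems(2) show ?case
    by (simp add: tpaths_Term)
next
  case (Cons x p1)
  obtain d w c' where x: "x = (d, w, c')"
    by (cases x)
  show ?case
  proof (cases q1)
    case Nil
    with Cons.prems(2) obtain \<tau> where "c = Term \<tau>"
      by (auto simp: tpaths_def)
    with Cons.prems(1) show ?thesis
      by (simp add: tpaths_Term)
  next
    case (Cons y q1')
    with Cons.prems(3) x obtain c'' where y: "y = (d, w, c'')" "seq_conf C2 c' = seq_conf C2 c''"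
      by (cases y) auto
    then have "c'' = c'"
      using inj_seq_conf by (metis injD)
    have "p1 \<in> tpaths c'"
      using Cons.prems(1) x by (simp add: tpaths_def)
    moreover have "q1' \<in> tpaths c'"
      using Cons.prems(2) \<open>q1 = y # q1'\<close> y(1) \<open>c'' = c'\<close> by (simp add: tpaths_def)
    moreover have "seq_path C2 p1 @ p2 = seq_path C2 q1' @ q2"
      using Cons.prems(3) \<open>q1 = y # q1'\<close> x y(1) \<open>c'' = c'\<close> by simp
    ultimately have "p1 = q1'"
      by (rule Cons.IH)
    with x y \<open>c'' = c'\<close> \<open>q1 = y # q1'\<close> show ?thesis
      by simp
  qed
qed

lemma inj_on_seq_join: "inj_on (seq_join C2) (seq_pairs C1 \<sigma> C2)"
proof (rule inj_onI)
  fix a b assume "a \<in> seq_pairs C1 \<sigma> C2" "b \<in> seq_pairs C1 \<sigma> C2" "seq_join C2 a = seq_join C2 b"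
  then show "a = b"
    using seq_path_append_cancel[of "fst a" "Conf C1 \<sigma>" "fst b" C2 "snd a" "snd b"]
    by (auto simp: seq_pairs_def seq_join_def split: prod.splits)
qed

section \<open>Path sums\<close>

context omega_module
begin

lemma nlfp_eqI:
  fixes \<Phi> :: "('s \<Rightarrow> 'm) \<Rightarrow> ('s \<Rightarrow> 'm)"
  assumes fixp: "\<Phi> X = X" and least: "\<And>Y s. \<Phi> Y = Y \<Longrightarrow> nle (X s) (Y s)"
  shows "nlfp \<Phi> = X"
  unfolding nlfp_def
proof (rule the_equality)
  show "\<Phi> X = X \<and> (\<forall>Y. \<Phi> Y = Y \<longrightarrow> (\<forall>s. nle (X s) (Y s)))"
    using fixp least by blast
next
  fix Z assume Z: "\<Phi> Z = Z \<and> (\<forall>Y. \<Phi> Y = Y \<longrightarrow> (\<forall>s. nle (Z s) (Y s)))"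
  show "Z = X"
  proof
    fix s
    show "Z s = X s"
      using Z fixp least[of Z s] by (intro nle_antisym) simp_all
  qed
qed

definition contrib :: "(('v, 'val) state \<Rightarrow> 'm) \<Rightarrow> ('v, 'val, 'w) conf \<Rightarrow> ('v, 'val, 'w) path \<Rightarrow> 'm"
  where "contrib f c p = act (wgt p) (f (last_state c p))"

definition path_sum :: "(('v, 'val) state \<Rightarrow> 'm) \<Rightarrow> ('v, 'val, 'w) conf \<Rightarrow> 'm"
  where "path_sum f c = (THE s. has_wsum (contrib f c) (tpaths c) s)"

lemma path_sum_eqI: "has_wsum (contrib f c) (tpaths c) s \<Longrightarrow> path_sum f c = s"
  unfolding path_sum_def by (rule the_equality) (blast intro: has_wsum_unique)+

lemma has_wsum_path_sum: "has_wsum (contrib f c) (tpaths c) (path_sum f c)"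
proof -
  obtain s where s: "has_wsum (contrib f c) (tpaths c) s"
    using has_wsum_exists[OF countable_tpaths] by blast
  then have "path_sum f c = s"
    by (rule path_sum_eqI)
  with s show ?thesis
    by simp
qed

lemma contrib_Nil: "contrib f c [] = f (conf_state c)"
  by (simp add: contrib_def wgt_def last_state_def act_one)

lemma contrib_Cons: "contrib f c ((d, w, c') # p) = act w (contrib f c' p)"
  by (simp add: contrib_def wgt_Cons last_state_def act_mult)

lemma contrib_seq_join:
  "p1 \<in> tpaths (Conf C1 \<sigma>) \<Longrightarrow> contrib f (Conf (Seq C1 C2) \<sigma>) (seq_join C2 (p1, p2)) =
    act (wgt p1) (contrib f (Conf C2 (last_state (Conf C1 \<sigma>) p1)) p2)"
  by (simp add: contrib_def last_state_seq_join wgt_seq_join act_mult)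

lemma path_sum_Term: "path_sum f (Term \<tau>) = f \<tau>"
proof (rule path_sum_eqI)
  have "contrib f (Term \<tau>) [] = f \<tau>"
    by (simp add: contrib_Nil)
  then show "has_wsum (contrib f (Term \<tau>)) (tpaths (Term \<tau>)) (f \<tau>)"
    using has_wsum_finite[of "{[]}" "contrib f (Term \<tau>)"] by (simp add: tpaths_Term)
qed

lemma path_sum_Conf:
  "path_sum f (Conf C \<sigma>) = (\<Sum>(d, w, c)\<in>succs (Conf C \<sigma>). act w (path_sum f c))"
proof (rule path_sum_eqI)
  let ?S = "succs (Conf C \<sigma>)" and ?J = "\<lambda>(d, w, c). tpaths c"
  have sum: "has_wsum (\<lambda>(x, p). contrib f (Conf C \<sigma>) (x # p)) (Sigma ?S ?J)
      (\<Sum>(d, w, c)\<in>?S. act w (path_sum f c))"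
  proof (rule has_wsum_Sigma)
    fix x assume "x \<in> ?S"
    show "countable (?J x)"
      by (simp add: countable_tpaths split: prod.split)
    show "has_wsum (\<lambda>p. contrib f (Conf C \<sigma>) (x # p)) (?J x)
        ((\<lambda>(d, w, c). act w (path_sum f c)) x)"
      by (cases x) (simp add: contrib_Cons has_wsum_act countable_tpaths has_wsum_path_sum)
  next
    show "has_wsum (\<lambda>(d, w, c). act w (path_sum f c)) ?S (\<Sum>(d, w, c)\<in>?S. act w (path_sum f c))"
      by (rule has_wsum_finite[OF finite_succs])
  qed
  have inj: "inj_on (\<lambda>(x, p). x # p) (Sigma ?S ?J)"
    by (rule inj_onI) auto
  have comp: "contrib f (Conf C \<sigma>) \<circ> (\<lambda>(x, p). x # p) = (\<lambda>(x, p). contrib f (Conf C \<sigma>) (x # p))"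
    by (auto simp: fun_eq_iff)
  show "has_wsum (contrib f (Conf C \<sigma>)) (tpaths (Conf C \<sigma>))
      (\<Sum>(d, w, c)\<in>?S. act w (path_sum f c))"
    unfolding tpaths_Conf has_wsum_reindex[OF inj] comp by (rule sum)
qed

lemma path_sum_Seq:
  "path_sum f (Conf (Seq C1 C2) \<sigma>) = path_sum (\<lambda>\<tau>. path_sum f (Conf C2 \<tau>)) (Conf C1 \<sigma>)"
proof (rule path_sum_eqI)
  let ?Z = "\<lambda>\<tau>. path_sum f (Conf C2 \<tau>)" and ?ls = "last_state (Conf C1 \<sigma>)"
  have "has_wsum (\<lambda>(p1, p2). act (wgt p1) (contrib f (Conf C2 (?ls p1)) p2)) (seq_pairs C1 \<sigma> C2)
      (path_sum ?Z (Conf C1 \<sigma>))"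
    unfolding seq_pairs_def
  proof (rule has_wsum_Sigma)
    fix p1
    show "countable (tpaths (Conf C2 (?ls p1)))"
      by (rule countable_tpaths)
    show "has_wsum (\<lambda>p2. act (wgt p1) (contrib f (Conf C2 (?ls p1)) p2))
        (tpaths (Conf C2 (?ls p1))) (contrib ?Z (Conf C1 \<sigma>) p1)"
      unfolding contrib_def[of ?Z]
      by (rule has_wsum_act[OF countable_tpaths has_wsum_path_sum])
  qed (rule has_wsum_path_sum)
  then have "has_wsum (contrib f (Conf (Seq C1 C2) \<sigma>) \<circ> seq_join C2) (seq_pairs C1 \<sigma> C2)
      (path_sum ?Z (Conf C1 \<sigma>))"
    by (subst has_wsum_cong) (auto simp: seq_pairs_def contrib_seq_join)
  then show "has_wsum (contrib f (Conf (Seq C1 C2) \<sigma>)) (tpaths (Conf (Seq C1 C2) \<sigma>))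
      (path_sum ?Z (Conf C1 \<sigma>))"
    unfolding tpaths_Seq by (simp add: has_wsum_reindex inj_on_seq_join)
qed

lemma finite_tpaths_While_decompose:
  assumes "\<phi> \<sigma>" and "finite F" and "F \<subseteq> tpaths (Conf (While \<phi> C) \<sigma>)"
  obtains G where "finite G" and "G \<subseteq> seq_pairs C \<sigma> (While \<phi> C)"
    and "sum (contrib f (Conf (While \<phi> C) \<sigma>)) F = (\<Sum>(p1, p2)\<in>G.
      act (wgt p1) (contrib f (Conf (While \<phi> C) (last_state (Conf C \<sigma>) p1)) p2))"
    and "\<And>p1 p2. (p1, p2) \<in> G \<Longrightarrow> \<exists>p\<in>F. length p2 < length p"
proof -
  let ?W = "While \<phi> C"
  let ?h = "\<lambda>q. (N, 1, Conf (Seq C ?W) \<sigma>) # seq_join ?W q"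
  have "tpaths (Conf ?W \<sigma>) = ?h ` seq_pairs C \<sigma> ?W"
    using assms(1) by (simp add: tpaths_Conf_single succs_While tpaths_Seq image_image)
  with assms(3) have "F \<subseteq> ?h ` seq_pairs C \<sigma> ?W"
    by simp
  then obtain G where G: "G \<subseteq> seq_pairs C \<sigma> ?W" "finite G" "F = ?h ` G"
    using finite_subset_image[OF assms(2)] by blast
  have "inj_on ?h G"
    using inj_on_subset[OF inj_on_seq_join G(1)] by (auto simp: inj_on_def)
  then have "sum (contrib f (Conf ?W \<sigma>)) F = sum (contrib f (Conf ?W \<sigma>) \<circ> ?h) G"
    unfolding G(3) by (rule sum.reindex)
  also have "\<dots> = (\<Sum>(p1, p2)\<in>G.
      act (wgt p1) (contrib f (Conf ?W (last_state (Conf C \<sigma>) p1)) p2))"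
    using G(1) by (intro sum.cong) (auto simp: seq_pairs_def contrib_Cons act_one contrib_seq_join)
  finally have sum_F: "sum (contrib f (Conf ?W \<sigma>)) F = (\<Sum>(p1, p2)\<in>G.
      act (wgt p1) (contrib f (Conf ?W (last_state (Conf C \<sigma>) p1)) p2))" .
  have shorter: "\<exists>p\<in>F. length p2 < length p" if "(p1, p2) \<in> G" for p1 p2
  proof
    show "?h (p1, p2) \<in> F"
      using that G(3) by blast
    show "length p2 < length (?h (p1, p2))"
      by (simp add: seq_join_def)
  qed
  show thesis
    by (rule that[OF G(2) G(1) sum_F shorter])
qed

lemma sum_contrib_While_nle:
  assumes wp_C: "\<And>g \<sigma>. wp act C g \<sigma> = path_sum g (Conf C \<sigma>)"
    and Y: "\<And>\<sigma>. Y \<sigma> = (if \<phi> \<sigma> then wp act C Y \<sigma> else f \<sigma>)"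
    and "finite F" and "F \<subseteq> tpaths (Conf (While \<phi> C) \<sigma>)" and "\<forall>p\<in>F. length p < n"
  shows "nle (sum (contrib f (Conf (While \<phi> C) \<sigma>)) F) (Y \<sigma>)"
  using assms(3-)
proof (induction n arbitrary: \<sigma> F)
  case 0
  then show ?case
    by (simp add: nle_zero)
next
  case (Suc n)
  let ?W = "While \<phi> C"
  show ?case
  proof (cases "\<phi> \<sigma>")
    case False
    then have "tpaths (Conf ?W \<sigma>) = {[(N, 1, Term \<sigma>)]}"
      by (simp add: tpaths_Conf_single succs_While tpaths_Term)
    with Suc.prems have "nle (sum (contrib f (Conf ?W \<sigma>)) F)
        (sum (contrib f (Conf ?W \<sigma>)) {[(N, 1, Term \<sigma>)]})"
      by (intro sum_nle_subset) auto
    also have "sum (contrib f (Conf ?W \<sigma>)) {[(N, 1, Term \<sigma>)]} = Y \<sigma>"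
      using Y False by (simp add: contrib_Cons contrib_Nil act_one)
    finally show ?thesis .
  next
    case True
    let ?ls = "last_state (Conf C \<sigma>)"
    obtain G where G: "finite G" "G \<subseteq> seq_pairs C \<sigma> ?W"
      and sum_F: "sum (contrib f (Conf ?W \<sigma>)) F =
        (\<Sum>(p1, p2)\<in>G. act (wgt p1) (contrib f (Conf ?W (?ls p1)) p2))"
      and shorter: "\<And>p1 p2. (p1, p2) \<in> G \<Longrightarrow> \<exists>p\<in>F. length p2 < length p"
      using finite_tpaths_While_decompose[OF True Suc.prems(1,2)] by blast
    have "nle (sum (contrib f (Conf ?W \<sigma>)) F) (path_sum Y (Conf C \<sigma>))"
      unfolding sum_F
    proof (rule sum_Sigma_nle_has_wsum[OF G(1) has_wsum_path_sum])
      show "fst ` G \<subseteq> tpaths (Conf C \<sigma>)"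
        using G(2) by (auto simp: seq_pairs_def)
      fix p1 assume "p1 \<in> fst ` G"
      have "nle (sum (contrib f (Conf ?W (?ls p1))) (G `` {p1})) (Y (?ls p1))"
      proof (rule Suc.IH)
        show "finite (G `` {p1})"
          using G(1) by (simp add: finite_Image)
        show "G `` {p1} \<subseteq> tpaths (Conf ?W (?ls p1))"
          using G(2) by (auto simp: seq_pairs_def)
        show "\<forall>p2\<in>G `` {p1}. length p2 < n"
        proof
          fix p2 assume "p2 \<in> G `` {p1}"
          then obtain p where "p \<in> F" "length p2 < length p"
            using shorter by blast
          with Suc.prems(3) show "length p2 < n"
            by auto
        qed
      qed
      then show "nle (\<Sum>p2\<in>G `` {p1}. act (wgt p1) (contrib f (Conf ?W (?ls p1)) p2))
          (contrib Y (Conf C \<sigma>) p1)"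
        unfolding contrib_def[of Y] act_sum[symmetric] by (rule act_nle_mono)
    qed
    also have "path_sum Y (Conf C \<sigma>) = Y \<sigma>"
      using wp_C Y True by simp
    finally show ?thesis .
  qed
qed

lemma wp_While:
  assumes wp_C: "\<And>g \<sigma>. wp act C g \<sigma> = path_sum g (Conf C \<sigma>)"
  shows "wp act (While \<phi> C) f \<sigma> = path_sum f (Conf (While \<phi> C) \<sigma>)"
proof -
  let ?X = "\<lambda>\<sigma>. path_sum f (Conf (While \<phi> C) \<sigma>)"
    and ?\<Phi> = "\<lambda>X \<sigma>. guard (\<lambda>s. \<not> \<phi> s) f \<sigma> + guard \<phi> (wp act C X) \<sigma>"
  have X: "?X \<tau> = (if \<phi> \<tau> then path_sum ?X (Conf C \<tau>) else f \<tau>)" for \<tau>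
    by (simp add: path_sum_Conf[of f "While \<phi> C"] succs_While act_one path_sum_Seq path_sum_Term)
  have "nlfp ?\<Phi> = ?X"
  proof (rule nlfp_eqI)
    show "?\<Phi> ?X = ?X"
      using X by (simp add: fun_eq_iff guard_def wp_C)
    fix Y s assume fixY: "?\<Phi> Y = Y"
    have Y: "Y \<tau> = (if \<phi> \<tau> then wp act C Y \<tau> else f \<tau>)" for \<tau>
      using fun_cong[OF fixY, of \<tau>] by (cases "\<phi> \<tau>") (simp_all add: guard_def)
    show "nle (?X s) (Y s)"
    proof (rule has_wsum_least[OF has_wsum_path_sum])
      fix F assume F: "finite F" "F \<subseteq> tpaths (Conf (While \<phi> C) s)"
      then obtain n where "length ` F \<subseteq> {..<n}"
        using finite_nat_bounded by blast
      with F show "nle (sum (contrib f (Conf (While \<phi> C) s)) F) (Y s)"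
        by (intro sum_contrib_While_nle[OF wp_C Y]) auto
    qed
  qed
  then show ?thesis
    by simp
qed

lemma wp_eq_path_sum: "wp act C f \<sigma> = path_sum f (Conf C \<sigma>)"
proof (induction C arbitrary: f \<sigma>)
  case (Assign x E)
  show ?case
    by (simp add: path_sum_Conf succs_Assign path_sum_Term act_one)
next
  case (Seq C1 C2)
  have "wp act C2 f = (\<lambda>\<tau>. path_sum f (Conf C2 \<tau>))"
    using Seq.IH(2) by (rule ext)
  with Seq.IH(1) show ?case
    by (simp add: path_sum_Seq)
next
  case (If \<phi> C1 C2)
  then show ?case
    by (simp add: path_sum_Conf succs_If act_one guard_def)
next
  case (Choice C1 C2)
  then show ?case
    by (simp add: path_sum_Conf succs_Choice act_one)
next
  case (Weight a)
  show ?case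
    by (simp add: path_sum_Conf succs_Weight path_sum_Term)
next
  case (While \<phi> C)
  show ?case
    by (rule wp_While[OF While.IH])
qed

end

theorem mainTheorem3:
  fixes act :: "'w::monoid_mult \<Rightarrow> 'm::comm_monoid_add \<Rightarrow> 'm"
    and C :: "('v, 'val, 'w) prog"
    and \<sigma> :: "('v, 'val) state"
    and f :: "('v, 'val) state \<Rightarrow> 'm"
  assumes "is_module act"
    and "omega_continuous act"
  shows "has_wsum (\<lambda>\<pi>. act (wgt \<pi>) (f (last_state (Conf C \<sigma>) \<pi>)))
           (tpaths (Conf C \<sigma>)) (wp act C f \<sigma>)"
proof -
  interpret omega_module act
    using assms by (rule omega_module.intro)
  show ?thesis
    using has_wsum_path_sum[of f "Conf C \<sigma>"] unfolding contrib_def wp_eq_path_sum .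
qed

end
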